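(* For $m\ge1$ define polynomials by $p_1(x)=x$, $q_1(x)=1$, and for $m>1$, $p_m(x)=p_{m-1}(x)q_{m-1}(x)$ and $q_m(x)=q_{m-1}(x)^2-\frac{p_{m-1}(x)^2}{x}$. For $m\ge1$ let $A_m$ be the $m\times m$ coloring matrix with entries $a_{ij}=1$ if $i>j$ and $a_{ij}=0$ if $i\le j$. Then for every $m\ge1$, the generating function $F^{(m)}(x)=\sum_{n\ge1}t_{A_m}^{(m)}(n)x^n$ is rational, and $$F^{(m)}(x)=\frac{p_m(x)}{q_m(x)}.$$
   Context: A plane tree is an unlabeled rooted tree in which the children of every vertex are linearly ordered. A coloring matrix is an $m\times m$ matrix $A=(a_{ij})$ with entries in $\{0,1\}$. An $A$-coloring of a plane tree assigns to each vertex a color in $\{1,\dots,m\}$ such that whenever a vertex of color $j$ is a child of a vertex of color $i$, $a_{ij}=1$. Let $t_A^{(i)}(n)$ be the number of pairs (plane tree with $n$ vertices, $A$-coloring of it) in which the root has color $i$. *)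

theory Defs
  imports "HOL-Computational_Algebra.Computational_Algebra"
begin

text \<open>A plane tree together with a coloring: each vertex carries its color,
  and the children of a vertex are given as an (ordered) list.\<close>
datatype ctree = CNode nat "ctree list"

fun root_color :: "ctree \<Rightarrow> nat" where
  "root_color (CNode c ts) = c"

fun nverts :: "ctree \<Rightarrow> nat" where
  "nverts (CNode c ts) = 1 + sum_list (map nverts ts)"

text \<open>A-coloring for an m x m 0/1 coloring matrix, represented as a predicate
  a i j (true iff a_ij = 1), indices 1..m.\<close>
fun is_A_colored :: "(nat \<Rightarrow> nat \<Rightarrow> bool) \<Rightarrow> nat \<Rightarrow> ctree \<Rightarrow> bool" where
  "is_A_colored a m (CNode c ts) =
     (c \<in> {1..m} \<and> (\<forall>t\<in>set ts. a c (root_color t) \<and> is_A_colored a m t))"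

definition t_count :: "(nat \<Rightarrow> nat \<Rightarrow> bool) \<Rightarrow> nat \<Rightarrow> nat \<Rightarrow> nat \<Rightarrow> nat" where
  "t_count a m i n = card {t. nverts t = n \<and> is_A_colored a m t \<and> root_color t = i}"

definition A_mat :: "nat \<Rightarrow> nat \<Rightarrow> bool" where
  "A_mat i j = (i > j)"

fun pq :: "nat \<Rightarrow> real poly \<times> real poly" where
  "pq 0 = undefined"
| "pq (Suc 0) = ([:0, 1:], 1)"
| "pq (Suc (Suc n)) =
     (let (p, q) = pq (Suc n) in (p * q, q ^ 2 - (p ^ 2) div [:0, 1:]))"

definition p_poly :: "nat \<Rightarrow> real poly" where "p_poly m = fst (pq m)"
definition q_poly :: "nat \<Rightarrow> real poly" where "q_poly m = snd (pq m)"

definition F_gen :: "nat \<Rightarrow> real fps" where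
  "F_gen m = Abs_fps (\<lambda>n. if n = 0 then 0 else real (t_count A_mat m m n))"

end

theory Submission
  imports Defs
begin

text \<open>Let T_i be the generating function of A-colored trees with root color i. Removing the
  root of such a tree leaves an ordered forest of trees whose root colors j satisfy a_ij = 1, so
  T_i (1 - \<Sum>_j a_ij T_j) = x. For A_m put U_i = 1 - T_1 - ... - T_(i-1); then T_i U_i = x and
  U_(i+1) = U_i - T_i. Induction on i gives polynomials r_i with p_i = x r_i and q_i = U_i r_i
  (take r_(i+1) = r_i q_i and use U_(i+1) U_i = U_i^2 - x), whence T_m q_m = x r_m = p_m.\<close>

definition colored_trees :: "(nat \<Rightarrow> nat \<Rightarrow> bool) \<Rightarrow> nat \<Rightarrow> nat \<Rightarrow> nat \<Rightarrow> ctree set" where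
  "colored_trees a m i n = {t. nverts t = n \<and> is_A_colored a m t \<and> root_color t = i}"

definition colored_forests :: "(nat \<Rightarrow> nat \<Rightarrow> bool) \<Rightarrow> nat \<Rightarrow> nat \<Rightarrow> nat \<Rightarrow> ctree list set" where
  "colored_forests a m i n = {ts. sum_list (map nverts ts) = n \<and>
     (\<forall>t\<in>set ts. is_A_colored a m t \<and> a i (root_color t))}"

lemma nverts_ge_1: "nverts t \<ge> 1"
  by (cases t) auto

lemma root_color_of_colored: "is_A_colored a m t \<Longrightarrow> root_color t \<in> {1..m}"
  by (cases t) auto

lemma colored_trees_0: "colored_trees a m i 0 = {}"
  using nverts_ge_1 by (auto simp: colored_trees_def Suc_le_eq)

lemma colored_trees_outside: "i \<notin> {1..m} \<Longrightarrow> colored_trees a m i n = {}"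
  using root_color_of_colored by (auto simp: colored_trees_def)

lemma colored_trees_Suc:
  assumes "i \<in> {1..m}"
  shows "colored_trees a m i (Suc n) = CNode i ` colored_forests a m i n"
proof (intro set_eqI iffI)
  fix t assume "t \<in> colored_trees a m i (Suc n)"
  then show "t \<in> CNode i ` colored_forests a m i n"
    by (cases t) (auto simp: colored_trees_def colored_forests_def)
qed (use assms in \<open>auto simp: colored_trees_def colored_forests_def\<close>)

lemma colored_forests_0: "colored_forests a m i 0 = {[]}"
proof -
  have "ts = []" if "ts \<in> colored_forests a m i 0" for ts
    using that nverts_ge_1[of "hd ts"] by (cases ts) (auto simp: colored_forests_def)
  then show ?thesis by (auto simp: colored_forests_def)
qed

lemma colored_forests_Suc:
  "colored_forests a m i (Suc n) =
     (\<Union>k\<in>{1..Suc n}. \<Union>j\<in>{j\<in>{1..m}. a i j}.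
        (\<lambda>(t, ts). t # ts) ` (colored_trees a m j k \<times> colored_forests a m i (Suc n - k)))"
  (is "?F = ?G")
proof (intro set_eqI iffI)
  fix ts assume ts: "ts \<in> ?F"
  then obtain t ts' where ts_eq: "ts = t # ts'"
    by (cases ts) (auto simp: colored_forests_def)
  have "nverts t \<in> {1..Suc n}"
    using ts ts_eq nverts_ge_1[of t] by (auto simp: colored_forests_def)
  moreover have "root_color t \<in> {j\<in>{1..m}. a i j}"
    using ts ts_eq root_color_of_colored by (auto simp: colored_forests_def)
  moreover have "(t, ts') \<in> colored_trees a m (root_color t) (nverts t) \<times>
                   colored_forests a m i (Suc n - nverts t)"
    using ts ts_eq by (auto simp: colored_trees_def colored_forests_def)
  ultimately show "ts \<in> ?G"
    unfolding ts_eq by blast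
qed (auto simp: colored_trees_def colored_forests_def)

lemma finite_colored_forests: "finite (colored_forests a m i n)"
proof (induction n arbitrary: i rule: less_induct)
  case (less n)
  show ?case
  proof (cases n)
    case 0
    then show ?thesis by (simp add: colored_forests_0)
  next
    case (Suc n')
    have "finite (colored_trees a m j k)" if "k \<in> {1..Suc n'}" for j k
    proof (cases "j \<in> {1..m}")
      case True
      with that less[of "k - 1" j] Suc show ?thesis
        using colored_trees_Suc[of j m a "k - 1"] by auto
    qed (simp add: colored_trees_outside)
    with less Suc show ?thesis
      by (auto simp: colored_forests_Suc)
  qed
qed

lemma finite_colored_trees: "finite (colored_trees a m i n)"
  by (cases n; cases "i \<in> {1..m}")
     (auto simp: colored_trees_0 colored_trees_outside colored_trees_Suc finite_colored_forests)

lemma card_colored_forests_Suc: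
  "card (colored_forests a m i (Suc n)) =
     (\<Sum>k=1..Suc n. \<Sum>j\<in>{j\<in>{1..m}. a i j}.
        card (colored_trees a m j k) * card (colored_forests a m i (Suc n - k)))"
proof -
  have cons_inj: "inj_on (\<lambda>(t, ts). t # ts) S" for S :: "(ctree \<times> ctree list) set"
    by (auto simp: inj_on_def)
  have fin: "finite (colored_trees a m j k \<times> colored_forests a m i l)" for j k l
    by (simp add: finite_colored_trees finite_colored_forests)
  have "card (colored_forests a m i (Suc n)) =
          (\<Sum>k=1..Suc n. card (\<Union>j\<in>{j\<in>{1..m}. a i j}.
             (\<lambda>(t, ts). t # ts) ` (colored_trees a m j k \<times> colored_forests a m i (Suc n - k))))"
    unfolding colored_forests_Suc
    by (rule card_UN_disjoint) (use fin in \<open>auto simp: colored_trees_def\<close>)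
  also have "\<dots> = (\<Sum>k=1..Suc n. \<Sum>j\<in>{j\<in>{1..m}. a i j}.
             card ((\<lambda>(t, ts). t # ts) ` (colored_trees a m j k \<times> colored_forests a m i (Suc n - k))))"
    by (intro sum.cong refl card_UN_disjoint) (use fin in \<open>auto simp: colored_trees_def\<close>)
  finally show ?thesis
    by (simp add: card_image[OF cons_inj] card_cartesian_product)
qed

definition tree_fps :: "(nat \<Rightarrow> nat \<Rightarrow> bool) \<Rightarrow> nat \<Rightarrow> nat \<Rightarrow> real fps" where
  "tree_fps a m i = Abs_fps (\<lambda>n. real (card (colored_trees a m i n)))"

definition forest_fps :: "(nat \<Rightarrow> nat \<Rightarrow> bool) \<Rightarrow> nat \<Rightarrow> nat \<Rightarrow> real fps" where
  "forest_fps a m i = Abs_fps (\<lambda>n. real (card (colored_forests a m i n)))"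

lemma tree_fps_nth_0 [simp]: "tree_fps a m i $ 0 = 0"
  by (simp add: tree_fps_def colored_trees_0)

lemma tree_fps_eq_X_mult_forest_fps:
  assumes "i \<in> {1..m}"
  shows "tree_fps a m i = fps_X * forest_fps a m i"
proof (rule fps_ext)
  fix n
  have "inj (CNode i)" by (simp add: inj_def)
  then show "tree_fps a m i $ n = (fps_X * forest_fps a m i) $ n"
    using assms by (cases n)
      (simp_all add: tree_fps_def forest_fps_def colored_trees_0 colored_trees_Suc card_image
        inj_on_subset)
qed

lemma forest_fps_eq:
  "forest_fps a m i = 1 + (\<Sum>j\<in>{j\<in>{1..m}. a i j}. tree_fps a m j) * forest_fps a m i"
proof (rule fps_ext)
  fix n
  show "forest_fps a m i $ n =
          (1 + (\<Sum>j\<in>{j\<in>{1..m}. a i j}. tree_fps a m j) * forest_fps a m i) $ n"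
  proof (cases n)
    case 0
    then show ?thesis by (simp add: forest_fps_def colored_forests_0 fps_mult_nth fps_sum_nth)
  next
    case (Suc n')
    have "((\<Sum>j\<in>{j\<in>{1..m}. a i j}. tree_fps a m j) * forest_fps a m i) $ Suc n' =
          (\<Sum>k=1..Suc n'. (\<Sum>j\<in>{j\<in>{1..m}. a i j}. tree_fps a m j $ k) *
             forest_fps a m i $ (Suc n' - k))"
      by (simp add: fps_mult_nth fps_sum_nth sum.atLeast_Suc_atMost)
    also have "\<dots> = real (card (colored_forests a m i (Suc n')))"
      by (simp add: card_colored_forests_Suc tree_fps_def forest_fps_def sum_distrib_right)
    finally show ?thesis
      using Suc by (simp add: forest_fps_def)
  qed
qed

theorem tree_fps_functional_equation:
  assumes "i \<in> {1..m}"
  shows "tree_fps a m i * (1 - (\<Sum>j\<in>{j\<in>{1..m}. a i j}. tree_fps a m j)) = fps_X"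
proof -
  have "forest_fps a m i * (1 - (\<Sum>j\<in>{j\<in>{1..m}. a i j}. tree_fps a m j)) = 1"
    using forest_fps_eq[of a m i] by (simp add: algebra_simps)
  then show ?thesis
    by (simp add: tree_fps_eq_X_mult_forest_fps[OF assms] mult.assoc)
qed

definition lower_fps :: "nat \<Rightarrow> nat \<Rightarrow> real fps" where
  "lower_fps m i = 1 - (\<Sum>j\<in>{1..<i}. tree_fps A_mat m j)"

lemma tree_fps_mult_lower_fps:
  assumes "i \<in> {1..m}"
  shows "tree_fps A_mat m i * lower_fps m i = fps_X"
proof -
  have "{j\<in>{1..m}. A_mat i j} = {1..<i}"
    using assms by (auto simp: A_mat_def)
  then show ?thesis
    using tree_fps_functional_equation[OF assms, of A_mat] by (simp add: lower_fps_def)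
qed

lemma lower_fps_Suc: "i \<ge> 1 \<Longrightarrow> lower_fps m (Suc i) = lower_fps m i - tree_fps A_mat m i"
  by (simp add: lower_fps_def sum.atLeastLessThan_Suc)

lemma pq_Suc:
  assumes "n \<ge> 1"
  shows "p_poly (Suc n) = p_poly n * q_poly n"
    and "q_poly (Suc n) = q_poly n ^ 2 - p_poly n ^ 2 div [:0, 1:]"
  using assms by (cases n; simp add: p_poly_def q_poly_def split: prod.split)+

lemma p_poly_q_poly_factor:
  assumes "1 \<le> i" "i \<le> m"
  shows "\<exists>r. p_poly i = [:0, 1:] * r \<and> fps_of_poly (q_poly i) = lower_fps m i * fps_of_poly r
           \<and> poly (q_poly i) 0 = 1"
  using assms
proof (induction i rule: dec_induct)
  case base
  show ?case
    by (intro exI[of _ 1]) (simp add: p_poly_def q_poly_def lower_fps_def)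
next
  case (step k)
  then obtain r where p: "p_poly k = [:0, 1:] * r"
    and q: "fps_of_poly (q_poly k) = lower_fps m k * fps_of_poly r"
    and q0: "poly (q_poly k) 0 = 1"
    by auto
  define Q R U T where "Q = fps_of_poly (q_poly k)" and "R = fps_of_poly r"
    and "U = lower_fps m k" and "T = tree_fps A_mat m k"
  have "p_poly k ^ 2 = [:0, 1:] * ([:0, 1:] * r ^ 2)"
    unfolding p by (simp only: power2_eq_square ac_simps)
  then have "p_poly k ^ 2 div [:0, 1:] = [:0, 1:] * r ^ 2"
    by (metis nonzero_mult_div_cancel_left pCons_eq_0_iff zero_neq_one)
  then have q_Suc: "q_poly (Suc k) = q_poly k ^ 2 - [:0, 1:] * r ^ 2"
    using pq_Suc(2)[OF \<open>1 \<le> k\<close>] by simp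
  have TU: "T * U = fps_X"
    unfolding T_def U_def using tree_fps_mult_lower_fps step by simp
  have "fps_of_poly (q_poly (Suc k)) = Q ^ 2 - fps_X * R ^ 2"
    by (simp add: q_Suc Q_def R_def fps_of_poly_diff fps_of_poly_mult fps_of_poly_power)
  also have "\<dots> = (U - T) * (R * Q)"
    by (simp add: Q_def R_def q U_def [symmetric] TU [symmetric] algebra_simps power2_eq_square)
  also have "\<dots> = lower_fps m (Suc k) * fps_of_poly (r * q_poly k)"
    by (simp add: lower_fps_Suc[OF \<open>1 \<le> k\<close>] U_def T_def R_def Q_def fps_of_poly_mult)
  finally show ?case
    using pq_Suc(1)[OF \<open>1 \<le> k\<close>] p q0 q_Suc
    by (intro exI[of _ "r * q_poly k"]) (simp add: mult.assoc power2_eq_square)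
qed

theorem theorem40:
  fixes m :: nat
  assumes "m \<ge> 1"
  shows "poly (q_poly m) 0 \<noteq> 0 \<and>
         F_gen m = fps_of_poly (p_poly m) / fps_of_poly (q_poly m)"
proof -
  obtain r where p: "p_poly m = [:0, 1:] * r"
    and q: "fps_of_poly (q_poly m) = lower_fps m m * fps_of_poly r"
    and q0: "poly (q_poly m) 0 = 1"
    using p_poly_q_poly_factor[OF assms order.refl] by blast
  have F: "F_gen m = tree_fps A_mat m m"
    by (rule fps_ext)
       (simp add: F_gen_def tree_fps_def t_count_def colored_trees_def [symmetric] colored_trees_0)
  have "fps_of_poly (q_poly m) \<noteq> 0"
    using q0 fps_of_poly_nth[of "q_poly m" 0] by (auto simp: poly_0_coeff_0)
  moreover have "F_gen m * fps_of_poly (q_poly m) = fps_of_poly (p_poly m)"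
    using tree_fps_mult_lower_fps[of m m] assms
    by (simp add: F p q fps_of_poly_mult mult.assoc [symmetric])
  ultimately show ?thesis
    using q0 by (metis nonzero_mult_div_cancel_right one_neq_zero)
qed

end
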